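(* Let $\Omega\subset\mathbb R^3$ be a bounded open set with $C^2$ boundary and let $b\in C(\overline\Omega)\cap C^1(\Omega)$ be such that $-\Delta+b$ in $\Omega$ with Dirichlet boundary conditions is coercive. Then, as $\lambda\to\infty$, uniformly for $x$ from compact subsets of $\Omega$, $$\int_\Omega b(y)U_{x,\lambda}(y)\Big(\frac{\lambda^{-1/2}}{|x-y|}-U_{x,\lambda}(y)\Big)dy=2\pi(\pi-2)b(x)\lambda^{-2}+\mathcal O(\lambda^{-3}\log\lambda).$$
   Context: $U_{x,\lambda}(y)=\lambda^{1/2}(1+\lambda^2|y-x|^2)^{-1/2}$ for $x\in\mathbb R^3$, $\lambda>0$. *)

theory Defs
  imports "HOL-Analysis.Analysis"
begin

definition bubbleU :: "real ^ 3 \<Rightarrow> real \<Rightarrow> real ^ 3 \<Rightarrow> real" where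
  "bubbleU x lam y = sqrt lam / sqrt (1 + lam\<^sup>2 * (norm (y - x))\<^sup>2)"

definition C1_on :: "(real ^ 3) set \<Rightarrow> (real ^ 3 \<Rightarrow> real) \<Rightarrow> bool" where
  "C1_on S f \<longleftrightarrow> (\<exists>g. (\<forall>y\<in>S. (f has_derivative (\<lambda>h. g y \<bullet> h)) (at y)) \<and> continuous_on S g)"

definition C2_on :: "(real ^ 3) set \<Rightarrow> (real ^ 3 \<Rightarrow> real) \<Rightarrow> bool" where
  "C2_on S f \<longleftrightarrow> (\<exists>g. (\<forall>y\<in>S. (f has_derivative (\<lambda>h. g y \<bullet> h)) (at y)) \<and>
                      (\<forall>i. C1_on S (\<lambda>y. g y $ i)))"

definition C2_boundary :: "(real ^ 3) set \<Rightarrow> bool" where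
  "C2_boundary \<Omega> \<longleftrightarrow> (\<forall>p\<in>frontier \<Omega>. \<exists>r>0. \<exists>\<phi> g.
      C2_on (ball p r) \<phi> \<and>
      (\<forall>y\<in>ball p r. (\<phi> has_derivative (\<lambda>h. g y \<bullet> h)) (at y) \<and> g y \<noteq> 0) \<and>
      \<Omega> \<inter> ball p r = {y\<in>ball p r. \<phi> y < 0})"

text \<open>Coercivity of -Delta + b on Omega with Dirichlet boundary conditions:
  the quadratic form int |grad u|^2 + b u^2 dominates c int |grad u|^2 for some c > 0,
  tested on C^1 functions with compact support in Omega (a dense subspace of H^1_0).\<close>
definition dirichlet_coercive :: "(real ^ 3) set \<Rightarrow> (real ^ 3 \<Rightarrow> real) \<Rightarrow> bool" where
  "dirichlet_coercive \<Omega> b \<longleftrightarrow> (\<exists>c>0. \<forall>u g.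
      (\<forall>y. (u has_derivative (\<lambda>h. g y \<bullet> h)) (at y)) \<and> continuous_on UNIV g \<and>
      (\<exists>K. compact K \<and> K \<subseteq> \<Omega> \<and> (\<forall>y. y \<notin> K \<longrightarrow> u y = 0)) \<longrightarrow>
      integral \<Omega> (\<lambda>y. (norm (g y))\<^sup>2 + b y * (u y)\<^sup>2) \<ge> c * integral \<Omega> (\<lambda>y. (norm (g y))\<^sup>2))"

end

(* Off the point y = x the integrand equals b(y) k(|y - x|) with the explicit radial kernel
   k(r) = 1/(r sqrt(1 + L^2 r^2)) - L/(1 + L^2 r^2) >= 0, so everything reduces to radial
   integrals in R^3 (polar coordinates: |z - c| has density 4 pi r^2 on a ball around c).
   On a ball B(x,e) inside the domain, b(y) is replaced by b(x): the integral of k(|y - x|) over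
   B(x,e) is 4 pi/L^2 (sqrt(1 + (L e)^2) - L e + arctan(L e) - 1) = 2 pi (pi - 2)/L^2 + O(1/(L^3 e)),
   and the Lipschitz error is controlled by r k(r) <= 1/(L^2 r^2 (1 + L r)), whose integral
   over B(x,e) is 4 pi ln(1 + L e)/L^3. Outside the ball k <= 1/(2 L^3 e^4). All constants are
   uniform for x in a compact K once e is below the distance from K to the boundary. *)
theory Submission
  imports Defs
begin

lemma emeasure_ball_real3:
  "0 \<le> r \<Longrightarrow> emeasure lborel (ball (c::real^3) r) = ennreal (4/3 * pi * r^3)"
  by (simp add: emeasure_ball eval_unit_ball_vol)

lemma emeasure_cball_real3:
  "0 \<le> r \<Longrightarrow> emeasure lborel (cball (c::real^3) r) = ennreal (4/3 * pi * r^3)"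
  by (simp add: emeasure_cball eval_unit_ball_vol)

lemma emeasure_distr_norm_ball_greaterThan:
  assumes "0 < R"
  shows "emeasure (distr (density lborel (indicator (ball (c::real^3) R))) borel (\<lambda>z. norm (z - c))) {a<..}
    = ennreal (4/3 * pi * (R^3 - (max 0 a)^3))"
proof -
  have "emeasure (distr (density lborel (indicator (ball c R))) borel (\<lambda>z. norm (z - c))) {a<..}
      = (\<integral>\<^sup>+z. indicator (ball c R) z * indicator {z. a < norm (z - c)} z \<partial>lborel)"
    by (simp add: emeasure_distr vimage_def, subst emeasure_density)
       (auto intro!: nn_integral_cong borel_measurable_indicator simp: indicator_def)
  also have "\<dots> = (\<integral>\<^sup>+z. indicator (ball c R - cball c a) z \<partial>lborel)"
    by (intro nn_integral_cong) (auto simp: indicator_def dist_norm norm_minus_commute)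
  also have "\<dots> = emeasure lborel (ball c R - cball c a)"
    by simp
  also have "\<dots> = ennreal (4/3 * pi * (R^3 - (max 0 a)^3))"
  proof (cases "a < R")
    case True
    have cball: "emeasure lborel (cball c a) = ennreal (4/3 * pi * (max 0 a)^3)"
      by (cases "a < 0") (auto simp: emeasure_cball_real3)
    moreover have "emeasure lborel (ball c R - cball c a)
        = emeasure lborel (ball c R) - emeasure lborel (cball c a)"
      using True by (intro emeasure_Diff) (auto simp: cball)
    ultimately show ?thesis
      using True assms by (simp add: emeasure_ball_real3 ennreal_minus power_mono algebra_simps)
  next
    case False
    then have "ball c R - cball c a = {}" by auto
    moreover have "R^3 \<le> (max 0 a)^3" using False assms by (intro power_mono) auto
    ultimately show ?thesis by (simp only: emeasure_empty) (simp add: ennreal_eq_0_iff mult_le_0_iff)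
  qed
  finally show ?thesis .
qed

lemma emeasure_shell_density_greaterThan:
  assumes "0 < R"
  shows "emeasure (density lborel (\<lambda>r. ennreal (indicator {0..R} r * (4*pi*r^2)))) {a<..}
    = ennreal (4/3 * pi * (R^3 - (max 0 a)^3))"
proof -
  define m where "m = max 0 a"
  have "emeasure (density lborel (\<lambda>r. ennreal (indicator {0..R} r * (4*pi*r^2)))) {a<..}
      = (\<integral>\<^sup>+r. ennreal (indicator ({0..R} \<inter> {a<..}) r * (4*pi*r^2)) \<partial>lborel)"
    by (subst emeasure_density) (auto intro!: nn_integral_cong simp: indicator_def)
  also have "\<dots> = ennreal (4/3 * pi * (R^3 - m^3))"
  proof (cases "m \<le> R")
    case True
    have n1: "negligible {r \<in> {m..R} - {0..R} \<inter> {a<..}. 4*pi*r^2 \<noteq> 0}"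
      by (rule negligible_subset[OF negligible_sing[of m]]) (auto simp: m_def)
    have n2: "negligible {r \<in> {0..R} \<inter> {a<..} - {m..R}. 4*pi*r^2 \<noteq> 0}"
      by (rule negligible_subset[OF negligible_sing[of m]]) (auto simp: m_def)
    have "((\<lambda>r. 4*pi*r^2) has_integral (4/3*pi*R^3 - 4/3*pi*m^3)) {m..R}"
      using True by (intro fundamental_theorem_of_calculus)
        (auto intro!: derivative_eq_intros simp: has_real_derivative_iff_has_vector_derivative[symmetric])
    then have "((\<lambda>r. 4*pi*r^2) has_integral (4/3*pi*R^3 - 4/3*pi*m^3)) ({0..R} \<inter> {a<..})"
      using has_integral_spike_set_eq[OF n1 n2] by blast
    then show ?thesis
      using True by (subst nn_integral_has_integral_lebesgue) (auto simp: m_def power_mono algebra_simps)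
  next
    case False
    then have "{0..R} \<inter> {a<..} = {}" by (auto simp: m_def)
    moreover have "R^3 \<le> m^3" using False assms by (intro power_mono) auto
    ultimately show ?thesis by (simp add: ennreal_eq_0_iff mult_le_0_iff)
  qed
  finally show ?thesis by (simp add: m_def)
qed

lemma distr_norm_ball_eq_shell_density:
  assumes "0 < R"
  shows "distr (density lborel (indicator (ball (c::real^3) R))) borel (\<lambda>z. norm (z - c))
    = density lborel (\<lambda>r. ennreal (indicator {0..R} r * (4*pi*r^2)))"
  by (rule measure_eqI_lessThan)
     (use assms in \<open>simp_all add: emeasure_distr_norm_ball_greaterThan emeasure_shell_density_greaterThan\<close>)

lemma has_integral_radial_ball:
  fixes c :: "real^3" and g :: "real \<Rightarrow> real"
  assumes R: "0 < R" and g_meas: "g \<in> borel_measurable borel" and g_nonneg: "\<And>r. 0 \<le> r \<Longrightarrow> 0 \<le> g r"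
    and g_int: "((\<lambda>r. 4*pi*r^2 * g r) has_integral V) {0..R}"
  shows "((\<lambda>z. g (norm (z - c))) has_integral V) (ball c R)"
proof -
  have g_norm_meas: "(\<lambda>z. g (norm (z - c))) \<in> borel_measurable borel"
    using g_meas by measurable
  have "0 \<le> V"
    using g_int by (rule has_integral_nonneg) (auto intro!: mult_nonneg_nonneg g_nonneg)
  have "(\<integral>\<^sup>+z. ennreal (indicator (ball c R) z * g (norm (z - c))) \<partial>lborel)
      = (\<integral>\<^sup>+z. ennreal (g (norm (z - c))) \<partial>density lborel (indicator (ball c R)))"
    by (subst nn_integral_density)
       (auto intro!: nn_integral_cong borel_measurable_indicator
          measurable_compose[OF g_norm_meas measurable_ennreal] simp: indicator_def)
  also have "\<dots> = (\<integral>\<^sup>+r. ennreal (g r) \<partial>distr (density lborel (indicator (ball c R))) borel (\<lambda>z. norm (z - c)))"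
    using g_meas by (subst nn_integral_distr) auto
  also have "\<dots> = (\<integral>\<^sup>+r. ennreal (g r) \<partial>density lborel (\<lambda>r. ennreal (indicator {0..R} r * (4*pi*r^2))))"
    by (simp add: distr_norm_ball_eq_shell_density R)
  also have "\<dots> = (\<integral>\<^sup>+r. ennreal (indicator {0..R} r * (4*pi*r^2 * g r)) \<partial>lborel)"
    using g_meas by (subst nn_integral_density)
      (auto intro!: nn_integral_cong simp: indicator_def ennreal_mult[symmetric] g_nonneg)
  also have "\<dots> = ennreal V"
    by (rule nn_integral_has_integral_lebesgue) (auto intro!: g_int mult_nonneg_nonneg g_nonneg)
  finally have "((\<lambda>z. indicator (ball c R) z * g (norm (z - c))) has_integral V) UNIV"
    using \<open>0 \<le> V\<close> by (intro nn_integral_has_integral)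
      (auto intro!: borel_measurable_times borel_measurable_indicator g_norm_meas simp: indicator_def g_nonneg)
  then have "((\<lambda>z. if z \<in> ball c R then g (norm (z - c)) else 0) has_integral V) UNIV"
    by (rule has_integral_eq[rotated]) (simp add: indicator_def)
  then show ?thesis
    by (subst has_integral_restrict_UNIV[symmetric])
qed

definition bubble_kernel :: "real \<Rightarrow> real \<Rightarrow> real" where
  "bubble_kernel L r = (if r \<le> 0 then 0 else 1 / (r * sqrt (1 + L^2 * r^2)) - L / (1 + L^2 * r^2))"

lemma bubble_product_eq_bubble_kernel:
  assumes "0 < L" and "y \<noteq> x"
  shows "bubbleU x L y * (1 / (sqrt L * norm (x - y)) - bubbleU x L y) = bubble_kernel L (norm (y - x))"
proof -
  define r where "r = norm (y - x)"
  define s where "s = sqrt (1 + L^2 * r^2)"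
  have "0 < r" using assms(2) by (simp add: r_def)
  have "0 < s" by (simp add: s_def add_pos_nonneg)
  have U: "bubbleU x L y = sqrt L / s" by (simp add: bubbleU_def s_def r_def)
  have "norm (x - y) = r" by (simp add: r_def norm_minus_commute)
  then have "bubbleU x L y * (1 / (sqrt L * norm (x - y)) - bubbleU x L y)
      = 1 / (r * s) - (sqrt L)^2 / s^2"
    unfolding U using assms(1) \<open>0 < r\<close> \<open>0 < s\<close> by (simp add: field_simps power2_eq_square)
  also have "\<dots> = bubble_kernel L r"
    using assms(1) \<open>0 < r\<close> by (simp add: bubble_kernel_def s_def add_nonneg_nonneg)
  finally show ?thesis by (simp add: r_def)
qed

lemma bubble_kernel_eq:
  assumes "0 < L" and "0 < r"
  shows "bubble_kernel L r = 1 / (r * (1 + L^2 * r^2) * (sqrt (1 + L^2 * r^2) + L * r))"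
proof -
  define s where "s = sqrt (1 + L^2 * r^2)"
  have "0 < s" by (simp add: s_def add_pos_nonneg)
  have s2: "s^2 = 1 + L^2 * r^2" by (simp add: s_def add_nonneg_nonneg)
  have "0 < s + L * r" using assms \<open>0 < s\<close> by (simp add: add_pos_pos)
  have "(s - L * r) * (s + L * r) = 1" using s2 by (simp add: algebra_simps power2_eq_square)
  have "bubble_kernel L r = 1 / (r * s) - L / s^2"
    using assms(2) s2 by (simp add: bubble_kernel_def s_def)
  also have "\<dots> = (s - L * r) / (r * s^2)"
    using assms(2) \<open>0 < s\<close> by (simp add: field_simps power2_eq_square)
  also have "s - L * r = 1 / (s + L * r)"
    using \<open>(s - L * r) * (s + L * r) = 1\<close> \<open>0 < s + L * r\<close> by (simp add: field_simps)
  finally show ?thesis using s2 by (simp add: s_def field_simps)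
qed

lemma bubble_kernel_nonneg:
  assumes "0 < L" shows "0 \<le> bubble_kernel L r"
proof (cases "0 < r")
  case True
  have "0 < sqrt (1 + L^2 * r^2) + L * r"
    using assms True by (intro add_pos_pos) (simp_all add: add_pos_nonneg)
  then show ?thesis
    using assms True by (simp add: bubble_kernel_eq add_pos_nonneg)
qed (simp add: bubble_kernel_def)

lemma bubble_kernel_le_far:
  assumes "0 < L" and "0 < d" and "d \<le> r"
  shows "bubble_kernel L r \<le> 1 / (2 * L^3 * d^4)"
proof -
  define t where "t = L * r"
  have "0 < t" using assms by (simp add: t_def)
  have "t \<le> sqrt (1 + L^2 * r^2)"
    unfolding t_def by (rule real_le_rsqrt) (simp add: power_mult_distrib)
  have "bubble_kernel L r = 1 / (r * (1 + t^2) * (sqrt (1 + L^2 * r^2) + t))"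
    using assms by (simp add: bubble_kernel_eq t_def power_mult_distrib)
  also have "\<dots> \<le> 1 / (r * t^2 * (2 * t))"
    using assms \<open>0 < t\<close> \<open>t \<le> sqrt (1 + L^2 * r^2)\<close>
    by (intro divide_left_mono mult_mono mult_pos_pos) (auto simp: add_pos_nonneg)
  also have "\<dots> = 1 / (2 * L^3 * r^4)"
    by (simp add: t_def field_simps power_mult_distrib eval_nat_numeral)
  also have "\<dots> \<le> 1 / (2 * L^3 * d^4)"
    using assms by (intro divide_left_mono mult_left_mono mult_pos_pos power_mono) auto
  finally show ?thesis .
qed

lemma mult_bubble_kernel_le:
  assumes "0 < L" and "0 \<le> r"
  shows "r * bubble_kernel L r \<le> 1 / (L^2 * r^2 * (1 + L * r))"
proof (cases "r = 0")
  case False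
  define t where "t = L * r"
  have "0 < t" using assms False by (simp add: t_def)
  have "t \<le> sqrt (1 + L^2 * r^2)"
    unfolding t_def by (rule real_le_rsqrt) (simp add: power_mult_distrib)
  have "r * bubble_kernel L r = 1 / ((1 + t^2) * (sqrt (1 + L^2 * r^2) + t))"
    using assms False by (simp add: bubble_kernel_eq t_def power_mult_distrib)
  also have "\<dots> \<le> 1 / (t^2 * (1 + t))"
    using \<open>0 < t\<close> \<open>t \<le> sqrt (1 + L^2 * r^2)\<close>
    by (intro divide_left_mono mult_mono mult_pos_pos) (auto simp: add_pos_nonneg)
  also have "\<dots> = 1 / (L^2 * r^2 * (1 + L * r))"
    by (simp add: t_def power_mult_distrib)
  finally show ?thesis .
qed (simp add: bubble_kernel_def)

lemma has_integral_bubble_kernel: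
  assumes "0 < L" and "0 \<le> d"
  shows "((\<lambda>r. 4*pi*r^2 * bubble_kernel L r) has_integral
          4*pi/L^2 * (sqrt (1 + (L*d)^2) - L*d + arctan (L*d) - 1)) {0..d}"
proof -
  define F where "F r = 4*pi/L^2 * (sqrt (1 + (L*r)^2) - L*r + arctan (L*r))" for r
  have "(F has_real_derivative 4*pi*r^2 * bubble_kernel L r) (at r)" if "0 \<le> r" for r
  proof -
    define q where "q = 1 + (L*r)^2"
    define s where "s = sqrt q"
    have "0 < q" by (simp add: q_def add_pos_nonneg)
    then have "0 < s" by (simp add: s_def)
    have "((\<lambda>r. sqrt (1 + (L*r)^2)) has_real_derivative inverse s / 2 * (2 * L^2 * r)) (at r)"
      using \<open>0 < q\<close> unfolding s_def q_def
      by (intro DERIV_chain2[where g="\<lambda>r. 1 + (L*r)^2", OF DERIV_real_sqrt])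
         (auto intro!: derivative_eq_intros simp: power2_eq_square)
    moreover have "((\<lambda>r. arctan (L*r)) has_real_derivative inverse q * L) (at r)"
      unfolding q_def
      by (rule DERIV_chain2[where g="\<lambda>r. L*r", OF DERIV_arctan]) (auto intro!: derivative_eq_intros)
    ultimately have "(F has_real_derivative 4*pi/L^2 * (inverse s / 2 * (2 * L^2 * r) - L + inverse q * L)) (at r)"
      unfolding F_def by (intro DERIV_cmult DERIV_add DERIV_diff) (auto intro!: derivative_eq_intros)
    moreover have "4*pi/L^2 * (inverse s / 2 * (2 * L^2 * r) - L + inverse q * L) = 4*pi*r^2 * bubble_kernel L r"
    proof (cases "r = 0")
      case False
      have "inverse q * L - L = -(L^3 * r^2 / q)"
        using \<open>0 < q\<close> by (simp add: field_simps q_def power3_eq_cube power2_eq_square)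
      then have "inverse s / 2 * (2 * L^2 * r) - L + inverse q * L = L^2 * r / s - L^3 * r^2 / q"
        by (simp add: field_simps)
      also have "4*pi/L^2 * \<dots> = 4*pi*r^2 * (1 / (r * s) - L / q)"
        using assms(1) False \<open>0 < q\<close> \<open>0 < s\<close> by (simp add: field_simps power3_eq_cube power2_eq_square)
      also have "\<dots> = 4*pi*r^2 * bubble_kernel L r"
        using that False by (simp add: bubble_kernel_def s_def q_def power_mult_distrib)
      finally show ?thesis .
    qed (simp add: s_def q_def bubble_kernel_def)
    ultimately show ?thesis by (rule DERIV_cong)
  qed
  then have "((\<lambda>r. 4*pi*r^2 * bubble_kernel L r) has_integral F d - F 0) {0..d}"
    using assms(2) by (intro fundamental_theorem_of_calculus)
      (auto simp: has_real_derivative_iff_has_vector_derivative[symmetric] intro: DERIV_subset)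
  also have "F d - F 0 = 4*pi/L^2 * (sqrt (1 + (L*d)^2) - L*d + arctan (L*d) - 1)"
    by (simp add: F_def right_diff_distrib)
  finally show ?thesis .
qed

lemma sqrt_one_plus_square_sub_plus_arctan_approx:
  assumes "0 < t"
  shows "\<bar>sqrt (1 + t^2) - t + arctan t - pi/2\<bar> \<le> 1/t"
proof -
  define s where "s = sqrt (1 + t^2)"
  have "t \<le> s" unfolding s_def by (rule real_le_rsqrt) simp
  have "(s - t) * (s + t) = 1" by (simp add: s_def algebra_simps power2_eq_square)
  then have "s - t = 1 / (s + t)" using assms \<open>t \<le> s\<close> by (simp add: field_simps)
  also have "\<dots> \<le> 1/t" using assms \<open>t \<le> s\<close> by (intro divide_left_mono) auto
  finally have "s - t \<le> 1/t" .
  have "pi/2 - arctan t = arctan (1/t)"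
    using arctan_inverse[of t] assms by (simp add: inverse_eq_divide)
  moreover have "0 < arctan (1/t)"
    using assms arctan_le_zero_iff[of "1/t"] by auto
  moreover have "arctan (1/t) \<le> 1/t"
    using abs_arctan_le[of "1/t"] assms by (simp add: abs_le_iff)
  ultimately have "\<bar>s - t + arctan t - pi/2\<bar> \<le> 1/t"
    using \<open>t \<le> s\<close> \<open>s - t \<le> 1/t\<close> unfolding abs_le_iff by linarith
  then show ?thesis unfolding s_def .
qed

lemma ball_bubble_kernel_integral_approx:
  assumes "0 < L" and "0 < e"
  shows "\<bar>4*pi/L^2 * (sqrt (1 + (L*e)^2) - L*e + arctan (L*e) - 1) - 2*pi*(pi - 2)/L^2\<bar>
    \<le> 4*pi / (L^3 * e)"
proof -
  have "4*pi/L^2 * (sqrt (1 + (L*e)^2) - L*e + arctan (L*e) - 1) - 2*pi*(pi - 2)/L^2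
      = 4*pi/L^2 * (sqrt (1 + (L*e)^2) - L*e + arctan (L*e) - pi/2)"
    using assms(1) by (simp add: field_simps)
  also have "\<bar>\<dots>\<bar> \<le> 4*pi/L^2 * (1 / (L*e))"
    unfolding abs_mult using assms
    by (intro mult_mono sqrt_one_plus_square_sub_plus_arctan_approx) auto
  also have "\<dots> = 4*pi / (L^3 * e)"
    by (simp add: power2_eq_square power3_eq_cube)
  finally show ?thesis .
qed

lemma has_integral_shell_kernel_majorant:
  assumes "0 < L" and "0 \<le> d"
  shows "((\<lambda>r. 4*pi*r^2 * (1 / (L^2 * r^2 * (1 + L*r)))) has_integral 4*pi/L^3 * ln (1 + L*d)) {0..d}"
proof -
  have "((\<lambda>r. 4*pi/L^3 * ln (1 + L*r)) has_real_derivative 4*pi / (L^2 * (1 + L*r))) (at r)"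
    if "0 \<le> r" for r
  proof -
    have "0 < 1 + L*r" using assms that by (simp add: add_pos_nonneg)
    then have "((\<lambda>r. ln (1 + L*r)) has_real_derivative L / (1 + L*r)) (at r)"
      using assms(1) by (auto intro!: derivative_eq_intros simp: field_simps)
    then have "((\<lambda>r. 4*pi/L^3 * ln (1 + L*r)) has_real_derivative 4*pi/L^3 * (L / (1 + L*r))) (at r)"
      by (rule DERIV_cmult)
    moreover have "4*pi/L^3 * (L / (1 + L*r)) = 4*pi / (L^2 * (1 + L*r))"
      using assms(1) \<open>0 < 1 + L*r\<close> by (simp add: power3_eq_cube power2_eq_square)
    ultimately show ?thesis by (rule DERIV_cong)
  qed
  then have "((\<lambda>r. 4*pi / (L^2 * (1 + L*r))) has_integral
      4*pi/L^3 * ln (1 + L*d) - 4*pi/L^3 * ln (1 + L*0)) {0..d}"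
    using assms(2) by (intro fundamental_theorem_of_calculus)
      (auto simp: has_real_derivative_iff_has_vector_derivative[symmetric] intro: DERIV_subset)
  then have "((\<lambda>r. 4*pi / (L^2 * (1 + L*r))) has_integral 4*pi/L^3 * ln (1 + L*d)) {0..d}"
    by simp
  then show ?thesis
    by (rule has_integral_spike[OF negligible_sing[of 0], rotated]) simp
qed

lemma bubble_kernel_measurable [measurable]: "bubble_kernel L \<in> borel_measurable borel"
  unfolding bubble_kernel_def by measurable

lemma has_integral_ball_bubble_kernel:
  fixes x :: "real^3"
  assumes "0 < L" and "0 < e"
  shows "((\<lambda>y. bubble_kernel L (norm (y - x))) has_integral
          4*pi/L^2 * (sqrt (1 + (L*e)^2) - L*e + arctan (L*e) - 1)) (ball x e)"
  using has_integral_radial_ball[OF assms(2) bubble_kernel_measurable bubble_kernel_nonneg[OF assms(1)]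
      has_integral_bubble_kernel[OF assms(1) less_imp_le[OF assms(2)]]] .

lemma bubble_kernel_absolutely_integrable_on:
  fixes x :: "real^3"
  assumes "0 < L" and "bounded S" and "S \<in> sets lebesgue"
  shows "(\<lambda>y. bubble_kernel L (norm (y - x))) absolutely_integrable_on S"
proof -
  obtain R where "0 < R" "S \<subseteq> ball x R"
    using bounded_subset_ballD[OF assms(2)] by blast
  have "(\<lambda>y. bubble_kernel L (norm (y - x))) absolutely_integrable_on ball x R"
    using has_integral_integrable[OF has_integral_ball_bubble_kernel[OF assms(1) \<open>0 < R\<close>]]
    by (intro nonnegative_absolutely_integrable_1) (auto intro: bubble_kernel_nonneg[OF assms(1)])
  then show ?thesis
    using assms(3) \<open>S \<subseteq> ball x R\<close> by (rule set_integrable_subset)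
qed

lemma integral_ball_bubble_kernel_lipschitz_estimate:
  fixes b :: "real^3 \<Rightarrow> real"
  assumes "0 < L" and "0 < e" and "0 \<le> G"
    and lip: "\<And>y. y \<in> ball x e \<Longrightarrow> \<bar>b y - b x\<bar> \<le> G * norm (y - x)"
    and int: "(\<lambda>y. b y * bubble_kernel L (norm (y - x))) integrable_on ball x e"
  shows "\<bar>integral (ball x e) (\<lambda>y. b y * bubble_kernel L (norm (y - x)))
           - b x * (4*pi/L^2 * (sqrt (1 + (L*e)^2) - L*e + arctan (L*e) - 1))\<bar>
         \<le> G * (4*pi/L^3 * ln (1 + L*e))"
proof -
  let ?k = "\<lambda>y. bubble_kernel L (norm (y - x))"
  let ?h = "\<lambda>y. 1 / (L^2 * (norm (y - x))^2 * (1 + L * norm (y - x)))"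
  have k: "(?k has_integral 4*pi/L^2 * (sqrt (1 + (L*e)^2) - L*e + arctan (L*e) - 1)) (ball x e)"
    using assms(1,2) by (rule has_integral_ball_bubble_kernel)
  have "(?h has_integral 4*pi/L^3 * ln (1 + L*e)) (ball x e)"
    using assms(1,2) by (intro has_integral_radial_ball has_integral_shell_kernel_majorant) auto
  then have h: "((\<lambda>y. G * ?h y) has_integral G * (4*pi/L^3 * ln (1 + L*e))) (ball x e)"
    by (rule has_integral_mult_right)
  define J where "J = integral (ball x e) (\<lambda>y. b y * ?k y)
    - b x * (4*pi/L^2 * (sqrt (1 + (L*e)^2) - L*e + arctan (L*e) - 1))"
  have "((\<lambda>y. b y * ?k y - b x * ?k y) has_integral J) (ball x e)"
    unfolding J_def using int k by (intro has_integral_diff has_integral_mult_right) auto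
  then have "norm J \<le> integral (ball x e) (\<lambda>y. G * ?h y)"
  proof (subst integral_unique[symmetric], assumption,
         intro integral_norm_bound_integral has_integral_integrable[OF h])
    fix y assume y: "y \<in> ball x e"
    have "norm (b y * ?k y - b x * ?k y) = \<bar>b y - b x\<bar> * ?k y"
      using bubble_kernel_nonneg[OF assms(1)] by (simp add: abs_mult left_diff_distrib[symmetric])
    also have "\<dots> \<le> G * (norm (y - x) * ?k y)"
      using mult_right_mono[OF lip[OF y] bubble_kernel_nonneg[OF assms(1)]] by (simp add: mult.assoc)
    also have "\<dots> \<le> G * ?h y"
      using mult_bubble_kernel_le[OF assms(1)] \<open>0 \<le> G\<close> by (intro mult_left_mono) auto
    finally show "norm (b y * ?k y - b x * ?k y) \<le> G * ?h y" .
  qed (auto intro: has_integral_integrable)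
  then show ?thesis
    using integral_unique[OF h] by (simp add: J_def)
qed

lemma integral_bubble_kernel_far_estimate:
  fixes b :: "real^3 \<Rightarrow> real"
  assumes "0 < L" and "0 < e" and "S \<in> lmeasurable"
    and bound: "\<And>y. y \<in> S \<Longrightarrow> \<bar>b y\<bar> \<le> M"
    and far: "\<And>y. y \<in> S \<Longrightarrow> e \<le> norm (y - x)"
    and int: "(\<lambda>y. b y * bubble_kernel L (norm (y - x))) integrable_on S"
  shows "\<bar>integral S (\<lambda>y. b y * bubble_kernel L (norm (y - x)))\<bar> \<le> M * measure lebesgue S / (2 * L^3 * e^4)"
proof -
  define c where "c = M / (2 * L^3 * e^4)"
  have "\<bar>integral S (\<lambda>y. b y * bubble_kernel L (norm (y - x)))\<bar> \<le> integral S (\<lambda>_. c)"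
    unfolding real_norm_def[symmetric]
  proof (rule integral_norm_bound_integral[OF int integrable_on_const[OF assms(3)]])
    fix y assume "y \<in> S"
    then have "0 \<le> M" using bound[of y] by linarith
    have "norm (b y * bubble_kernel L (norm (y - x))) = \<bar>b y\<bar> * bubble_kernel L (norm (y - x))"
      using bubble_kernel_nonneg[OF assms(1)] by (simp add: abs_mult)
    also have "\<dots> \<le> M * (1 / (2 * L^3 * e^4))"
      using \<open>y \<in> S\<close> bound bubble_kernel_nonneg[OF assms(1)] bubble_kernel_le_far[OF assms(1,2) far] \<open>0 \<le> M\<close>
      by (intro mult_mono) auto
    finally show "norm (b y * bubble_kernel L (norm (y - x))) \<le> c" by (simp add: c_def)
  qed
  also have "\<dots> = c * measure lebesgue S"
    using lmeasure_integral[OF assms(3)] integral_mult_right[of S c "\<lambda>_. 1"] by simp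
  finally show ?thesis by (simp add: c_def)
qed

lemma integral_bubble_product_eq_bubble_kernel:
  assumes "0 < L"
  shows "integral \<Omega> (\<lambda>y. b y * bubbleU x L y * (1 / (sqrt L * norm (x - y)) - bubbleU x L y))
    = integral \<Omega> (\<lambda>y. b y * bubble_kernel L (norm (y - x)))"
  using assms by (intro integral_spike[where S="{x}"]) (auto simp: bubble_product_eq_bubble_kernel mult.assoc)

lemma bounded_mult_bubble_kernel_absolutely_integrable_on:
  fixes b :: "real^3 \<Rightarrow> real"
  assumes "0 < L" and "bounded \<Omega>" and "\<Omega> \<in> sets lebesgue"
    and "b \<in> borel_measurable (lebesgue_on \<Omega>)" and "\<And>y. y \<in> \<Omega> \<Longrightarrow> \<bar>b y\<bar> \<le> M"
  shows "(\<lambda>y. b y * bubble_kernel L (norm (y - x))) absolutely_integrable_on \<Omega>"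
proof -
  have "bounded (b ` \<Omega>)"
    using assms(5) by (intro boundedI[of _ M]) auto
  then show ?thesis
    by (rule absolutely_integrable_bounded_measurable_product[OF bilinear_times assms(4,3) _
          bubble_kernel_absolutely_integrable_on[OF assms(1-3)]])
qed

lemma bubble_integral_estimate:
  fixes \<Omega> :: "(real^3) set" and b :: "real^3 \<Rightarrow> real"
  assumes "0 < L" and "0 < e" and "0 \<le> G"
    and "bounded \<Omega>" and "\<Omega> \<in> sets lebesgue"
    and b_meas: "b \<in> borel_measurable (lebesgue_on \<Omega>)"
    and b_bound: "\<And>y. y \<in> \<Omega> \<Longrightarrow> \<bar>b y\<bar> \<le> M"
    and "ball x e \<subseteq> \<Omega>"
    and lip: "\<And>y. y \<in> ball x e \<Longrightarrow> \<bar>b y - b x\<bar> \<le> G * norm (y - x)"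
  shows "\<bar>integral \<Omega> (\<lambda>y. b y * bubbleU x L y * (1 / (sqrt L * norm (x - y)) - bubbleU x L y))
           - 2*pi*(pi - 2) * b x / L^2\<bar>
         \<le> (4*pi*M/e + 4*pi*G * ln (1 + L*e) + M * measure lebesgue \<Omega> / (2*e^4)) / L^3"
proof -
  let ?k = "\<lambda>y. bubble_kernel L (norm (y - x))"
  let ?I = "4*pi/L^2 * (sqrt (1 + (L*e)^2) - L*e + arctan (L*e) - 1)"
  have "\<Omega> \<in> lmeasurable"
    using assms(4,5) by (rule bounded_set_imp_lmeasurable)
  have "x \<in> \<Omega>" using \<open>ball x e \<subseteq> \<Omega>\<close> assms(2) by auto
  have bk: "(\<lambda>y. b y * ?k y) absolutely_integrable_on \<Omega>"
    using assms(1,4,5) b_meas b_bound by (rule bounded_mult_bubble_kernel_absolutely_integrable_on)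
  have ball: "ball x e \<in> sets lebesgue" by simp
  have int_ball: "(\<lambda>y. b y * ?k y) integrable_on ball x e"
    using set_integrable_subset[OF bk ball \<open>ball x e \<subseteq> \<Omega>\<close>] by (rule set_lebesgue_integral_eq_integral)
  have far: "\<Omega> - ball x e \<in> sets lebesgue" using assms(5) ball by blast
  have int_far: "(\<lambda>y. b y * ?k y) integrable_on (\<Omega> - ball x e)"
    using set_integrable_subset[OF bk far Diff_subset] by (rule set_lebesgue_integral_eq_integral)
  have "integral \<Omega> (\<lambda>y. b y * bubbleU x L y * (1 / (sqrt L * norm (x - y)) - bubbleU x L y))
      = integral \<Omega> (\<lambda>y. b y * ?k y)"
    using assms(1) by (rule integral_bubble_product_eq_bubble_kernel)
  also have "\<dots> = integral (ball x e) (\<lambda>y. b y * ?k y) + integral (\<Omega> - ball x e) (\<lambda>y. b y * ?k y)"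
    using \<open>ball x e \<subseteq> \<Omega>\<close> integral_Un[OF int_ball int_far]
    by (simp add: Un_absorb1 Un_Diff_cancel)
  finally have split: "integral \<Omega> (\<lambda>y. b y * bubbleU x L y * (1 / (sqrt L * norm (x - y)) - bubbleU x L y))
      - 2*pi*(pi - 2) * b x / L^2
      = b x * (?I - 2*pi*(pi - 2) / L^2) + (integral (ball x e) (\<lambda>y. b y * ?k y) - b x * ?I)
        + integral (\<Omega> - ball x e) (\<lambda>y. b y * ?k y)"
    by (simp add: algebra_simps)
  have "\<bar>b x * (?I - 2*pi*(pi - 2) / L^2)\<bar> \<le> M * (4*pi / (L^3 * e))"
    unfolding abs_mult using b_bound[OF \<open>x \<in> \<Omega>\<close>] ball_bubble_kernel_integral_approx[OF assms(1,2)]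
    by (intro mult_mono) auto
  moreover have "\<bar>integral (ball x e) (\<lambda>y. b y * ?k y) - b x * ?I\<bar> \<le> G * (4*pi/L^3 * ln (1 + L*e))"
    using assms(1-3) lip int_ball by (rule integral_ball_bubble_kernel_lipschitz_estimate)
  moreover have "\<bar>integral (\<Omega> - ball x e) (\<lambda>y. b y * ?k y)\<bar>
      \<le> M * measure lebesgue (\<Omega> - ball x e) / (2 * L^3 * e^4)"
    using assms(1,2) fmeasurable_Diff[OF \<open>\<Omega> \<in> lmeasurable\<close> ball] b_bound _ int_far
    by (rule integral_bubble_kernel_far_estimate) (auto simp: dist_norm norm_minus_commute)
  moreover have "M * measure lebesgue (\<Omega> - ball x e) / (2 * L^3 * e^4)
      \<le> M * measure lebesgue \<Omega> / (2 * L^3 * e^4)"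
    using b_bound[OF \<open>x \<in> \<Omega>\<close>] \<open>\<Omega> \<in> lmeasurable\<close> far assms(1,2)
    by (intro divide_right_mono mult_left_mono measure_mono_fmeasurable) auto
  ultimately have "\<bar>integral \<Omega> (\<lambda>y. b y * bubbleU x L y * (1 / (sqrt L * norm (x - y)) - bubbleU x L y))
      - 2*pi*(pi - 2) * b x / L^2\<bar>
      \<le> M * (4*pi / (L^3 * e)) + G * (4*pi/L^3 * ln (1 + L*e)) + M * measure lebesgue \<Omega> / (2 * L^3 * e^4)"
    unfolding split abs_le_iff by linarith
  also have "\<dots> = (4*pi*M/e + 4*pi*G * ln (1 + L*e) + M * measure lebesgue \<Omega> / (2*e^4)) / L^3"
    using assms(1,2) by (simp add: field_simps)
  finally show ?thesis .
qed

lemma thickening_subset_open: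
  fixes K :: "'a::{real_normed_vector,heine_borel} set"
  assumes "open \<Omega>" and "compact K" and "K \<subseteq> \<Omega>"
  obtains e where "0 < e" and "{x + z | x z. x \<in> K \<and> z \<in> cball 0 e} \<subseteq> \<Omega>"
proof (cases "K = {}")
  case False
  obtain e where "0 < e" and e: "{y. infdist y K \<le> e} \<subseteq> \<Omega>"
    using compact_in_open_separated[OF False assms(2,1,3)] by blast
  have "infdist (x + z) K \<le> e" if "x \<in> K" and "z \<in> cball 0 e" for x z
    using that infdist_le[of x K "x + z"] by (auto simp: dist_norm)
  then show ?thesis
    using that[OF \<open>0 < e\<close>] e by blast
qed (use that[of 1] in simp)

lemma C1_on_uniformly_lipschitz_near_compact:
  assumes "C1_on \<Omega> b" and "open \<Omega>" and "compact K" and "K \<subseteq> \<Omega>"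
  obtains e G where "0 < e" and "0 \<le> G" and "\<And>x. x \<in> K \<Longrightarrow> cball x e \<subseteq> \<Omega>"
    and "\<And>x y. x \<in> K \<Longrightarrow> y \<in> cball x e \<Longrightarrow> \<bar>b y - b x\<bar> \<le> G * norm (y - x)"
proof -
  obtain e where "0 < e" and "{x + z | x z. x \<in> K \<and> z \<in> cball 0 e} \<subseteq> \<Omega>"
    using thickening_subset_open[OF assms(2-4)] by blast
  define K' where "K' = {x + z | x z. x \<in> K \<and> z \<in> cball 0 e}"
  have "compact K'" unfolding K'_def using assms(3) by (rule compact_sums) simp
  have "K' \<subseteq> \<Omega>" unfolding K'_def by fact
  have cball_K': "cball x e \<subseteq> K'" if "x \<in> K" for x
  proof
    fix y assume "y \<in> cball x e"
    then have "y - x \<in> cball 0 e" by (simp add: dist_norm norm_minus_commute)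
    then show "y \<in> K'" unfolding K'_def using that by force
  qed
  obtain g where g: "\<forall>y\<in>\<Omega>. (b has_derivative (\<lambda>h. g y \<bullet> h)) (at y)" and "continuous_on \<Omega> g"
    using assms(1) unfolding C1_on_def by blast
  have "bounded (g ` K')"
    using continuous_on_subset[OF \<open>continuous_on \<Omega> g\<close> \<open>K' \<subseteq> \<Omega>\<close>] \<open>compact K'\<close>
    by (intro compact_imp_bounded compact_continuous_image)
  then obtain G where "0 < G" and G: "\<forall>y\<in>K'. norm (g y) \<le> G"
    unfolding bounded_pos by auto
  have "norm (b y - b x) \<le> G * norm (y - x)" if "x \<in> K" and "y \<in> cball x e" for x y
  proof (rule differentiable_bound[where S="cball x e" and f'="\<lambda>w h. g w \<bullet> h"])
    fix w assume "w \<in> cball x e"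
    then have "w \<in> K'" using cball_K'[OF \<open>x \<in> K\<close>] by auto
    then show "(b has_derivative (\<lambda>h. g w \<bullet> h)) (at w within cball x e)"
      using g \<open>K' \<subseteq> \<Omega>\<close> by (auto intro: has_derivative_at_withinI)
    show "onorm (\<lambda>h. g w \<bullet> h) \<le> G"
    proof (rule onorm_le)
      fix h :: "real^3"
      have "norm (g w \<bullet> h) \<le> norm (g w) * norm h" by (simp add: Cauchy_Schwarz_ineq2)
      also have "\<dots> \<le> G * norm h" using G \<open>w \<in> K'\<close> by (simp add: mult_right_mono)
      finally show "norm (g w \<bullet> h) \<le> G * norm h" .
    qed
  qed (use that \<open>0 < e\<close> in auto)
  moreover have "cball x e \<subseteq> \<Omega>" if "x \<in> K" for x
    using cball_K'[OF that] \<open>K' \<subseteq> \<Omega>\<close> by blast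
  ultimately show ?thesis
    using that[OF \<open>0 < e\<close> less_imp_le[OF \<open>0 < G\<close>]] by simp
qed

lemma bubble_error_le_log_bound:
  fixes A B G e L :: real
  assumes "0 < e" and "0 \<le> G" and "0 \<le> A" and "0 \<le> B" and L: "max (exp 1) (1 + e) \<le> L"
  shows "(A + 4*pi*G * ln (1 + L*e) + B) / L^3 \<le> (A + 8*pi*G + B) * ln L / L^3"
proof (rule divide_right_mono)
  have "0 < L" using L assms(1) by linarith
  have "1 \<le> ln L" using L \<open>0 < L\<close> by (simp add: ln_ge_iff)
  have "L * (1 + e) \<le> L * L" using L \<open>0 < L\<close> by (intro mult_left_mono) auto
  then have "1 + L*e \<le> L^2" using L assms(1) by (simp add: power2_eq_square distrib_left)
  then have "ln (1 + L*e) \<le> ln (L^2)"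
    using \<open>0 < L\<close> assms(1) by (subst ln_le_cancel_iff) (auto simp: add_pos_nonneg)
  then have ln_le: "ln (1 + L*e) \<le> 2 * ln L" using \<open>0 < L\<close> by (simp add: ln_realpow)
  have "4*pi*G * ln (1 + L*e) \<le> 8*pi*G * ln L"
    using mult_left_mono[OF ln_le, of "4*pi*G"] assms(2) by simp
  moreover have "A \<le> A * ln L" and "B \<le> B * ln L"
    using mult_left_mono[OF \<open>1 \<le> ln L\<close>] assms(3,4) by (metis mult.right_neutral)+
  ultimately show "A + 4*pi*G * ln (1 + L*e) + B \<le> (A + 8*pi*G + B) * ln L"
    unfolding distrib_right by linarith
  show "0 \<le> L^3" using \<open>0 < L\<close> by simp
qed

lemma bubble_integral_asymptotics:
  fixes \<Omega> :: "(real^3) set" and b :: "real^3 \<Rightarrow> real"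
  assumes "open \<Omega>" and "bounded \<Omega>" and "continuous_on (closure \<Omega>) b" and "C1_on \<Omega> b"
    and "compact K" and "K \<subseteq> \<Omega>"
  shows "\<exists>C lam0. \<forall>L\<ge>lam0. \<forall>x\<in>K.
    \<bar>integral \<Omega> (\<lambda>y. b y * bubbleU x L y * (1 / (sqrt L * norm (x - y)) - bubbleU x L y))
      - 2*pi*(pi - 2) * b x / L^2\<bar> \<le> C * ln L / L^3"
proof -
  obtain e G where "0 < e" "0 \<le> G" and cball: "\<And>x. x \<in> K \<Longrightarrow> cball x e \<subseteq> \<Omega>"
    and lip: "\<And>x y. x \<in> K \<Longrightarrow> y \<in> cball x e \<Longrightarrow> \<bar>b y - b x\<bar> \<le> G * norm (y - x)"
    using C1_on_uniformly_lipschitz_near_compact[OF assms(4,1,5,6)] by blast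
  have "bounded (b ` closure \<Omega>)"
    using compact_continuous_image[OF assms(3)] assms(2) by (simp add: compact_imp_bounded)
  then obtain M where "0 < M" and "\<And>y. y \<in> closure \<Omega> \<Longrightarrow> \<bar>b y\<bar> \<le> M"
    unfolding bounded_pos by auto
  then have M: "\<And>y. y \<in> \<Omega> \<Longrightarrow> \<bar>b y\<bar> \<le> M"
    using closure_subset by blast
  have "\<Omega> \<in> sets lebesgue" using assms(1) by simp
  have b_meas: "b \<in> borel_measurable (lebesgue_on \<Omega>)"
    using continuous_on_subset[OF assms(3) closure_subset] \<open>\<Omega> \<in> sets lebesgue\<close>
    by (rule continuous_imp_measurable_on_sets_lebesgue)
  show ?thesis
  proof (rule exI[of _ "4*pi*M/e + 8*pi*G + M * measure lebesgue \<Omega> / (2*e^4)"],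
         rule exI[of _ "max (exp 1) (1 + e)"], intro allI impI ballI)
    fix L x assume L: "max (exp 1) (1 + e) \<le> L" and "x \<in> K"
    then have "0 < L" using \<open>0 < e\<close> by linarith
    have "ball x e \<subseteq> \<Omega>" using cball[OF \<open>x \<in> K\<close>] ball_subset_cball by blast
    moreover have "\<And>y. y \<in> ball x e \<Longrightarrow> \<bar>b y - b x\<bar> \<le> G * norm (y - x)"
      using lip[OF \<open>x \<in> K\<close>] ball_subset_cball by blast
    ultimately show "\<bar>integral \<Omega> (\<lambda>y. b y * bubbleU x L y * (1 / (sqrt L * norm (x - y)) - bubbleU x L y))
        - 2*pi*(pi - 2) * b x / L^2\<bar>
      \<le> (4*pi*M/e + 8*pi*G + M * measure lebesgue \<Omega> / (2*e^4)) * ln L / L^3"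
      using \<open>0 < M\<close> \<open>0 < e\<close> \<open>0 \<le> G\<close> L
      by (intro order_trans[OF bubble_integral_estimate[OF \<open>0 < L\<close> \<open>0 < e\<close> \<open>0 \<le> G\<close> assms(2)
            \<open>\<Omega> \<in> sets lebesgue\<close> b_meas M]] bubble_error_le_log_bound) auto
  qed
qed

theorem lemma2p7:
  fixes \<Omega> :: "(real ^ 3) set" and b :: "real ^ 3 \<Rightarrow> real"
  assumes "open \<Omega>" and "bounded \<Omega>" and "C2_boundary \<Omega>"
    and "continuous_on (closure \<Omega>) b" and "C1_on \<Omega> b"
    and "dirichlet_coercive \<Omega> b"
  shows "\<forall>K. compact K \<and> K \<subseteq> \<Omega> \<longrightarrow>
    (\<exists>C lam0. \<forall>lam\<ge>lam0. \<forall>x\<in>K.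
      \<bar>integral \<Omega> (\<lambda>y. b y * bubbleU x lam y *
           (1 / (sqrt lam * norm (x - y)) - bubbleU x lam y))
        - 2 * pi * (pi - 2) * b x / lam\<^sup>2\<bar> \<le> C * ln lam / lam ^ 3)"
  using bubble_integral_asymptotics[OF assms(1,2,4,5)] by blast

end
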